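(* Let $\mu$ be a probability measure on $(0,\infty)$, and for real $p$ let $\mu_p:=\int_{(0,\infty)}x^{p-2}\,\mu(\mathrm{d}x)\in(0,\infty]$. Define $L_\mu\colon(0,\infty)\to\mathbb{R}$ by $L_\mu(d):=\int_{(0,\infty)}\min\!\big(1,\tfrac{d}{x}\big)\,\mu(\mathrm{d}x)$. Fix $c\in(0,1)$. Then the equation $L_\mu(d)=c$ has a unique root $d\in(0,\infty)$; denote it by $\delta=\delta_\mu:=L_\mu^{-1}(c)$. If $\mu_3<\infty$, then $$\delta\le\delta_*:=\begin{cases} c\,\mu_3 & \text{if } 0<c\le\tfrac12,\\[4pt] \dfrac{\mu_3-(2c-1)^2/\mu_1}{4(1-c)} & \text{if } \tfrac12\le c<1.\end{cases}$$
   Context: Here $\mu_1=\int_{(0,\infty)}x^{-1}\,\mu(\mathrm{d}x)$ and $\mu_3=\int_{(0,\infty)}x\,\mu(\mathrm{d}x)$; if $\mu_1=\infty$, the term $(2c-1)^2/\mu_1$ is interpreted as $0$. The two formulas for $\delta_*$ agree at $c=\tfrac12$ (both equal $\mu_3/2$). *)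

theory Defs
  imports "HOL-Probability.Probability"
begin

text \<open>The probability measure mu on (0,infinity) is represented as a probability
measure M on the Borel sets of the reals that is concentrated on (0,infinity).\<close>

definition mu_mom :: "real measure \<Rightarrow> real \<Rightarrow> ennreal" where
  "mu_mom M p = (\<integral>\<^sup>+ x. ennreal (x powr (p - 2)) * indicator {0<..} x \<partial>M)"

definition L_mu :: "real measure \<Rightarrow> real \<Rightarrow> real" where
  "L_mu M d = (\<integral> x. min 1 (d / x) * indicator {0<..} x \<partial>M)"

definition delta_star :: "real measure \<Rightarrow> real \<Rightarrow> real" where
  "delta_star M c =
     (if c \<le> 1/2 then c * enn2real (mu_mom M 3)
      else (enn2real (mu_mom M 3)
             - (if mu_mom M 1 = \<infinity> then 0 else (2*c - 1)^2 / enn2real (mu_mom M 1)))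
           / (4 * (1 - c)))"

end

theory Submission
  imports Defs
begin

text \<open>
  For \<open>a > 0\<close> the function \<open>L_mu\<close> is nondecreasing and \<open>1/a\<close>-Lipschitz on \<open>[a, \<infinity>)\<close>,
  tends to \<open>0\<close> at \<open>0\<close> and to \<open>1\<close> at \<open>\<infinity>\<close> by dominated convergence, and strictly
  increases wherever it is below \<open>1\<close>; hence it takes the value \<open>c\<close> exactly once.

  For the bound on the root \<open>\<delta>\<close>, \<open>min 1 (\<delta>/x)\<close> dominates functions of the form
  \<open>\<alpha> - \<beta> x - \<gamma>/x\<close> (AM-GM, with a free parameter \<open>t\<close> when \<open>c > 1/2\<close>).
  Integrating against \<open>\<mu>\<close> turns \<open>L_mu M \<delta> = c\<close> into an inequality between \<open>c\<close>,
  \<open>\<delta>\<close>, \<open>\<mu>\<^sub>3\<close> and \<open>\<mu>\<^sub>1\<close>; optimising over \<open>t\<close> gives \<open>\<delta>\<^sub>*\<close>.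
\<close>

lemma min_one_div_increment:
  fixes d d' x :: real
  assumes "0 < d" "d \<le> d'" "0 < x"
  shows "0 \<le> min 1 (d'/x) - min 1 (d/x)" and "min 1 (d'/x) - min 1 (d/x) \<le> (d' - d) / d"
proof -
  have le: "d/x \<le> d'/x"
    using assms by (simp add: divide_right_mono)
  then show "0 \<le> min 1 (d'/x) - min 1 (d/x)"
    by linarith
  show "min 1 (d'/x) - min 1 (d/x) \<le> (d' - d) / d"
  proof (cases "x \<le> d")
    case True
    then show ?thesis
      using le assms by (simp add: min_def)
  next
    case x_gt: False
    show ?thesis
    proof (cases "x \<le> d'")
      case True
      have "1 - d/x = (x - d) / x"
        using assms by (simp add: field_simps)
      also have "\<dots> \<le> (d' - d) / d"
        using assms x_gt True by (simp add: frac_le)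
      finally show ?thesis
        using True x_gt assms by (simp add: min_def)
    next
      case False
      have "d'/x - d/x = (d' - d) / x"
        by (simp add: diff_divide_distrib)
      also have "\<dots> \<le> (d' - d) / d"
        using assms x_gt by (simp add: frac_le)
      finally show ?thesis
        using False x_gt assms by (simp add: min_def)
    qed
  qed
qed

lemma min_one_div_ge_linear:
  fixes c d x :: real
  assumes "c \<le> 1/2" "0 < d" "0 < x"
  shows "2*c - c^2/d * x \<le> min 1 (d/x)"
proof -
  define u where "u = x/d"
  have u: "0 < u" and rw: "c^2/d * x = c^2*u" "d/x = 1/u"
    using assms by (simp_all add: u_def)
  have "0 \<le> (1 - c*u)^2 / u"
    using u by simp
  then have "2*c - c^2*u \<le> 1/u"
    using u by (simp add: field_simps power2_eq_square)
  moreover have "2*c - c^2*u \<le> 1"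
    using assms(1) mult_nonneg_nonneg[OF zero_le_power2[of c] less_imp_le[OF u]] by linarith
  ultimately show ?thesis
    unfolding rw by simp
qed

lemma min_one_div_ge_quadratic:
  fixes d x t :: real
  assumes "0 < d" "0 < x"
  shows "2*(1 + t) - 1/d * x - (1 - t)^2 * d / x \<le> 4*t * min 1 (d/x)"
proof -
  define u where "u = x/d"
  have u: "0 < u" and rw: "1/d * x = u" "(1 - t)^2 * d / x = (1 - t)^2 * (1/u)" "d/x = 1/u"
    using assms by (simp_all add: u_def)
  have "2*(1 + t) - u - (1 - t)^2 * (1/u) \<le> 4*t * min 1 (1/u)"
  proof (cases "u \<le> 1")
    case True
    have "0 \<le> (u - (1 - t))^2 / u"
      using u by simp
    then have "2*(1 + t) - u - (1 - t)^2 * (1/u) \<le> 4*t"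
      using u by (simp add: field_simps power2_eq_square)
    moreover have "min 1 (1/u) = 1"
      using True u by simp
    ultimately show ?thesis
      by simp
  next
    case False
    have "2*(1 + t)*u - u^2 - (1 - t)^2 \<le> 4*t"
      using zero_le_power2[of "u - (1 + t)"] by (simp add: power2_eq_square algebra_simps)
    then have "(2*(1 + t)*u - u^2 - (1 - t)^2) / u \<le> 4*t / u"
      using u by (simp add: divide_right_mono)
    then have "2*(1 + t) - u - (1 - t)^2 * (1/u) \<le> 4*t * (1/u)"
      using u by (simp add: field_simps power2_eq_square)
    moreover have "min 1 (1/u) = 1/u"
      using False u by simp
    ultimately show ?thesis
      by simp
  qed
  then show ?thesis
    unfolding rw .
qed

lemma le_of_quadratic_family_bound:
  fixes A B c \<delta> :: real
  assumes "0 < \<delta>" "0 < B" "c < 1"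
    and bound: "\<And>t. 2*(1 + t) - A/\<delta> - (1 - t)^2 * \<delta> * B \<le> 4*t*c"
  shows "\<delta> \<le> (A - (2*c - 1)^2 / B) / (4*(1 - c))"
proof -
  define k where "k = 2*c - 1"
  define t where "t = 1 - k/(\<delta>*B)"
  have "2*(1 + t) - (1 - t)^2 * \<delta> * B - 4*t*c = 4*(1 - c) + k^2/(\<delta>*B)"
    using assms unfolding t_def k_def by (simp add: field_simps power2_eq_square)
  then have "4*(1 - c) + k^2/(\<delta>*B) \<le> A/\<delta>"
    using bound[of t] by linarith
  then have "(4*(1 - c) + k^2/(\<delta>*B)) * \<delta> \<le> A"
    using \<open>0 < \<delta>\<close> by (simp add: pos_le_divide_eq)
  then have "4*(1 - c)*\<delta> + k^2/B \<le> A"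
    using \<open>0 < \<delta>\<close> by (simp add: algebra_simps)
  then show ?thesis
    using assms unfolding k_def by (simp add: pos_le_divide_eq mult.commute)
qed

locale positive_prob_space = prob_space M for M :: "real measure" +
  assumes sets_eq_borel: "sets M = sets borel"
    and emeasure_positive: "emeasure M {0<..} = 1"
begin

declare sets_eq_borel [measurable_cong]

lemma prob_positive [simp]: "prob {0<..} = 1"
  using emeasure_positive by (simp add: emeasure_eq_measure)

lemma integrable_indicator_positive: "integrable M (indicator {0<..} :: real \<Rightarrow> real)"
  by (rule integrable_const_bound[where B=1]) auto

lemma integrable_min_one_div:
  assumes "0 \<le> d"
  shows "integrable M (\<lambda>x. min 1 (d/x) * indicator {0<..} x)"
  by (rule integrable_const_bound[where B=1]) (use assms in \<open>auto simp: indicator_def\<close>)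

lemma integral_le_L_mu:
  assumes "0 \<le> d" "integrable M (\<lambda>x. g x * indicator {0<..} x)"
    and "\<And>x. 0 < x \<Longrightarrow> g x \<le> s * min 1 (d/x)"
  shows "(\<integral>x. g x * indicator {0<..} x \<partial>M) \<le> s * L_mu M d"
proof -
  have "g x * indicator {0<..} x \<le> s * (min 1 (d/x) * indicator {0<..} x)" for x
    using assms(3)[of x] by (cases "0 < x") auto
  then have "(\<integral>x. g x * indicator {0<..} x \<partial>M)
      \<le> (\<integral>x. s * (min 1 (d/x) * indicator {0<..} x) \<partial>M)"
    by (intro integral_mono assms(2) integrable_mult_right integrable_min_one_div assms(1))
  then show ?thesis
    unfolding L_mu_def by simp
qed

lemma L_mu_increment:
  assumes "0 < d" "d \<le> d'"
  shows "0 \<le> L_mu M d' - L_mu M d" and "L_mu M d' - L_mu M d \<le> (d' - d) / d"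
proof -
  let ?g = "\<lambda>x. (min 1 (d'/x) - min 1 (d/x)) * indicator {0<..} x"
  have diff: "L_mu M d' - L_mu M d = (\<integral>x. ?g x \<partial>M)"
    unfolding L_mu_def using assms integrable_min_one_div[of d] integrable_min_one_div[of d']
    by (simp add: left_diff_distrib)
  have bounds: "0 \<le> ?g x" "?g x \<le> (d' - d) / d" for x
    using min_one_div_increment[OF assms, of x] assms by (auto simp: indicator_def)
  have "integrable M ?g"
    using assms integrable_min_one_div[of d] integrable_min_one_div[of d']
    by (simp add: left_diff_distrib)
  then have "(\<integral>x. ?g x \<partial>M) \<le> (\<integral>x. (d' - d) / d \<partial>M)"
    using bounds by (intro integral_mono) auto
  then show "L_mu M d' - L_mu M d \<le> (d' - d) / d"
    using diff prob_space by simp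
  show "0 \<le> L_mu M d' - L_mu M d"
    unfolding diff using bounds by (intro integral_nonneg_AE) auto
qed

lemma lipschitz_on_L_mu:
  assumes "0 < a"
  shows "lipschitz_on (1/a) {a..} (L_mu M)"
proof (rule lipschitz_onI)
  have ordered: "dist (L_mu M x) (L_mu M y) \<le> 1/a * dist x y" if "a \<le> x" "x \<le> y" for x y
  proof -
    have "L_mu M y - L_mu M x \<le> (y - x) / x" "0 \<le> L_mu M y - L_mu M x"
      using L_mu_increment[of x y] assms that by auto
    moreover have "(y - x) / x \<le> (y - x) / a"
      using assms that by (simp add: frac_le)
    ultimately show ?thesis
      using that by (simp add: dist_real_def)
  qed
  show "dist (L_mu M x) (L_mu M y) \<le> 1/a * dist x y" if "x \<in> {a..}" "y \<in> {a..}" for x y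
    using ordered[of x y] ordered[of y x] that by (cases "x \<le> y") (auto simp: dist_commute)
  show "0 \<le> 1/a"
    using assms by simp
qed

lemma L_mu_tendsto_1: "(L_mu M \<longlongrightarrow> 1) at_top"
proof -
  have "((\<lambda>d. \<integral>x. min 1 (d/x) * indicator {0<..} x \<partial>M) \<longlongrightarrow> (\<integral>x. indicator {0<..} x \<partial>M)) at_top"
  proof (rule integral_dominated_convergence_at_top[where w="\<lambda>_. 1"])
    show "AE x in M. ((\<lambda>d. min 1 (d/x) * indicator {0<..} x) \<longlongrightarrow> indicator {0<..} x) at_top"
    proof (rule AE_I2)
      fix x :: real
      have "\<forall>\<^sub>F d in at_top. min 1 (d/x) * indicator {0<..} x = indicator {0<..} x"
        using eventually_ge_at_top[of x] by eventually_elim (auto simp: indicator_def)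
      then show "((\<lambda>d. min 1 (d/x) * indicator {0<..} x) \<longlongrightarrow> indicator {0<..} x) at_top"
        by (rule tendsto_eventually)
    qed
    show "\<forall>\<^sub>F d in at_top. AE x in M. norm (min 1 (d/x) * indicator {0<..} x) \<le> 1"
      using eventually_ge_at_top[of 0] by eventually_elim (auto simp: indicator_def)
    show "(\<lambda>x. min 1 (d/x) * indicator {0<..} x) \<in> borel_measurable M" for d :: real
      by measurable
    show "(indicator {0<..} :: real \<Rightarrow> real) \<in> borel_measurable M"
      by measurable
  qed simp
  then show ?thesis
    unfolding L_mu_def by simp
qed

lemma L_mu_tendsto_0: "(L_mu M \<longlongrightarrow> 0) (at_right 0)"
proof -
  have "((\<lambda>t. \<integral>x. min 1 (inverse t / x) * indicator {0<..} x \<partial>M) \<longlongrightarrow> (\<integral>x. 0 \<partial>M)) at_top"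
  proof (rule integral_dominated_convergence_at_top[where w="\<lambda>_. 1"])
    show "AE x in M. ((\<lambda>t. min 1 (inverse t / x) * indicator {0<..} x) \<longlongrightarrow> 0) at_top"
    proof (rule AE_I2)
      fix x :: real
      show "((\<lambda>t. min 1 (inverse t / x) * indicator {0<..} x) \<longlongrightarrow> 0) at_top"
      proof (cases "0 < x")
        case True
        have "((\<lambda>t. min 1 (inverse t / x)) \<longlongrightarrow> min 1 (0 / x)) at_top"
          using True by (intro tendsto_intros tendsto_inverse_0_at_top filterlim_ident) auto
        then show ?thesis
          using True by simp
      qed simp
    qed
    show "\<forall>\<^sub>F t in at_top. AE x in M. norm (min 1 (inverse t / x) * indicator {0<..} x) \<le> 1"
      using eventually_gt_at_top[of 0] by eventually_elim (auto simp: indicator_def)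
    show "(\<lambda>x. min 1 (inverse t / x) * indicator {0<..} x) \<in> borel_measurable M" for t :: real
      by measurable
  qed simp_all
  then show ?thesis
    unfolding L_mu_def filterlim_at_right_to_top by simp
qed

text \<open>If \<open>L_mu\<close> were constant on \<open>[a, b]\<close>, the mass of \<open>(a, \<infinity>)\<close> would vanish,
  because \<open>min 1 (d/x)\<close> strictly increases in \<open>d\<close> there; then \<open>L_mu M a = 1\<close>.\<close>

lemma L_mu_strict_mono_below_1:
  assumes "0 < a" "a < b" "L_mu M a < 1"
  shows "L_mu M a < L_mu M b"
proof (rule ccontr)
  assume "\<not> L_mu M a < L_mu M b"
  then have eq: "L_mu M b = L_mu M a"
    using L_mu_increment(1)[of a b] assms by simp
  let ?g = "\<lambda>x. (min 1 (b/x) - min 1 (a/x)) * indicator {0<..} x"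
  have int: "integrable M ?g"
    using assms integrable_min_one_div[of a] integrable_min_one_div[of b]
    by (simp add: left_diff_distrib)
  have nonneg: "AE x in M. 0 \<le> ?g x"
    using min_one_div_increment(1)[of a b] assms by (intro AE_I2) (auto simp: indicator_def)
  have "(\<integral>x. ?g x \<partial>M) = 0"
    using eq assms integrable_min_one_div[of a] integrable_min_one_div[of b]
    unfolding L_mu_def by (simp add: left_diff_distrib)
  then have "AE x in M. ?g x = 0"
    using integral_nonneg_eq_0_iff_AE[OF int nonneg] by simp
  then have "AE x in M. min 1 (a/x) * indicator {0<..} x = indicator {0<..} x"
  proof (rule AE_mp, intro AE_I2 impI)
    fix x :: real
    assume g0: "?g x = 0"
    have "x \<le> a" if "0 < x"
    proof (rule ccontr)
      assume "\<not> x \<le> a"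
      then have "a/x < 1" "a/x < b/x"
        using that assms by (simp_all add: divide_strict_right_mono)
      then show False
        using g0 that by (simp add: min_def split: if_splits)
    qed
    then show "min 1 (a/x) * indicator {0<..} x = indicator {0<..} x"
      by (auto simp: indicator_def)
  qed
  then have "L_mu M a = (\<integral>x. indicator {0<..} x \<partial>M)"
    unfolding L_mu_def by (rule integral_cong_AE[rotated 2]) measurable
  with assms show False
    by simp
qed

lemma ex1_L_mu_eq:
  assumes "0 < c" "c < 1"
  shows "\<exists>!d. 0 < d \<and> L_mu M d = c"
proof -
  obtain a where a: "0 < a" "L_mu M a < c"
    using eventually_happens'[OF trivial_limit_at_right_real
        eventually_conj[OF eventually_at_right_less order_tendstoD(2)[OF L_mu_tendsto_0 assms(1)]]]
    by auto
  obtain b where b: "a \<le> b" "c < L_mu M b"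
    using eventually_happens'[OF trivial_limit_at_top_linorder
        eventually_conj[OF eventually_ge_at_top[of a] order_tendstoD(1)[OF L_mu_tendsto_1 assms(2)]]]
    by auto
  have "continuous_on {a..b} (L_mu M)"
    using lipschitz_on_continuous_on[OF lipschitz_on_L_mu[OF a(1)]] by (rule continuous_on_subset) auto
  then obtain d where d: "a \<le> d" "L_mu M d = c"
    using IVT'[of "L_mu M" a c b] a b by auto
  have "d' = d" if "0 < d'" "L_mu M d' = c" for d'
    using L_mu_strict_mono_below_1[of d d'] L_mu_strict_mono_below_1[of d' d] that d a assms
    by (cases d d' rule: linorder_cases) auto
  then show ?thesis
    using a d by (intro ex1I[of _ d]) auto
qed

lemma integrable_mu_mom:
  assumes "mu_mom M p < \<infinity>"
  shows "integrable M (\<lambda>x. x powr (p - 2) * indicator {0<..} x)"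
    and "enn2real (mu_mom M p) = (\<integral>x. x powr (p - 2) * indicator {0<..} x \<partial>M)"
proof -
  have nn: "mu_mom M p = (\<integral>\<^sup>+x. ennreal (x powr (p - 2) * indicator {0<..} x) \<partial>M)"
    unfolding mu_mom_def by (rule nn_integral_cong) (auto simp: indicator_def)
  show int: "integrable M (\<lambda>x. x powr (p - 2) * indicator {0<..} x)"
    using assms unfolding nn by (intro integrableI_nonneg) (auto simp: indicator_def)
  show "enn2real (mu_mom M p) = (\<integral>x. x powr (p - 2) * indicator {0<..} x \<partial>M)"
    unfolding nn using nn_integral_eq_integral[OF int]
    by (simp add: indicator_def integral_nonneg_AE)
qed

lemma integrable_mu_mom_3:
  assumes "mu_mom M 3 < \<infinity>"
  shows "integrable M (\<lambda>x. x * indicator {0<..} x)"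
    and "enn2real (mu_mom M 3) = (\<integral>x. x * indicator {0<..} x \<partial>M)"
proof -
  have eq: "(\<lambda>x::real. x powr (3 - 2) * indicator {0<..} x) = (\<lambda>x. x * indicator {0<..} x)"
    by (auto simp: indicator_def)
  show "integrable M (\<lambda>x. x * indicator {0<..} x)"
    "enn2real (mu_mom M 3) = (\<integral>x. x * indicator {0<..} x \<partial>M)"
    using integrable_mu_mom[OF assms] unfolding eq by auto
qed

lemma integrable_mu_mom_1:
  assumes "mu_mom M 1 < \<infinity>"
  shows "integrable M (\<lambda>x. 1/x * indicator {0<..} x)"
    and "enn2real (mu_mom M 1) = (\<integral>x. 1/x * indicator {0<..} x \<partial>M)"
proof -
  have eq: "(\<lambda>x::real. x powr (1 - 2) * indicator {0<..} x) = (\<lambda>x. 1/x * indicator {0<..} x)"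
    by (auto simp: indicator_def powr_minus_divide)
  show "integrable M (\<lambda>x. 1/x * indicator {0<..} x)"
    "enn2real (mu_mom M 1) = (\<integral>x. 1/x * indicator {0<..} x \<partial>M)"
    using integrable_mu_mom[OF assms] unfolding eq by auto
qed

lemma integral_affine_mu_mom_3:
  assumes "mu_mom M 3 < \<infinity>"
  shows "integrable M (\<lambda>x. (a - b*x) * indicator {0<..} x)"
    and "(\<integral>x. (a - b*x) * indicator {0<..} x \<partial>M) = a - b * enn2real (mu_mom M 3)"
proof -
  note A = integrable_mu_mom_3[OF assms]
  have eq: "(\<lambda>x. (a - b*x) * indicator {0<..} x)
      = (\<lambda>x. a * indicator {0<..} x - b * (x * indicator {0<..} x))"
    by (simp add: fun_eq_iff algebra_simps)
  show "integrable M (\<lambda>x. (a - b*x) * indicator {0<..} x)"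
    unfolding eq by (intro Bochner_Integration.integrable_diff integrable_mult_right A(1) integrable_indicator_positive)
  show "(\<integral>x. (a - b*x) * indicator {0<..} x \<partial>M) = a - b * enn2real (mu_mom M 3)"
    unfolding eq A(2) using A(1) integrable_indicator_positive
    by simp
qed

lemma integral_affine_inverse_mu_mom:
  assumes "mu_mom M 3 < \<infinity>" "mu_mom M 1 < \<infinity>"
  shows "integrable M (\<lambda>x. (a - b*x - e/x) * indicator {0<..} x)"
    and "(\<integral>x. (a - b*x - e/x) * indicator {0<..} x \<partial>M)
      = a - b * enn2real (mu_mom M 3) - e * enn2real (mu_mom M 1)"
proof -
  note A = integral_affine_mu_mom_3[OF assms(1)] and B = integrable_mu_mom_1[OF assms(2)]
  have eq: "(\<lambda>x. (a - b*x - e/x) * indicator {0<..} x)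
      = (\<lambda>x. (a - b*x) * indicator {0<..} x - e * (1/x * indicator {0<..} x))"
    by (simp add: fun_eq_iff algebra_simps)
  show "integrable M (\<lambda>x. (a - b*x - e/x) * indicator {0<..} x)"
    unfolding eq by (intro Bochner_Integration.integrable_diff integrable_mult_right A(1) B(1))
  show "(\<integral>x. (a - b*x - e/x) * indicator {0<..} x \<partial>M)
      = a - b * enn2real (mu_mom M 3) - e * enn2real (mu_mom M 1)"
    unfolding eq B(2) Bochner_Integration.integral_diff[OF A(1) integrable_mult_right[OF B(1)]]
    by (simp only: integral_mult_right_zero A(2))
qed

lemma L_mu_root_le_mu_mom_3:
  assumes "0 < d" "L_mu M d = c" "c < 1" "mu_mom M 3 < \<infinity>"
  shows "d \<le> enn2real (mu_mom M 3) / (4*(1 - c))"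
proof -
  have "(\<integral>x. (4 - 1/d * x) * indicator {0<..} x \<partial>M) \<le> 4 * L_mu M d"
    by (rule integral_le_L_mu[OF _ integral_affine_mu_mom_3(1)[OF assms(4)]])
       (use assms(1) min_one_div_ge_quadratic[OF assms(1), of _ 1] in simp_all)
  then have "4 - 1/d * enn2real (mu_mom M 3) \<le> 4 * c"
    unfolding integral_affine_mu_mom_3(2)[OF assms(4)] assms(2) .
  then show ?thesis
    using assms by (simp add: field_simps)
qed

lemma L_mu_root_le_small_c:
  assumes "0 < d" "L_mu M d = c" "0 < c" "c \<le> 1/2" "mu_mom M 3 < \<infinity>"
  shows "d \<le> c * enn2real (mu_mom M 3)"
proof -
  have "(\<integral>x. (2*c - c^2/d * x) * indicator {0<..} x \<partial>M) \<le> 1 * L_mu M d"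
    by (rule integral_le_L_mu[OF _ integral_affine_mu_mom_3(1)[OF assms(5)]])
       (use assms(1) min_one_div_ge_linear[OF assms(4,1)] in simp_all)
  then have "2*c - c^2/d * enn2real (mu_mom M 3) \<le> c"
    unfolding integral_affine_mu_mom_3(2)[OF assms(5)] assms(2) by simp
  then show ?thesis
    using assms by (simp add: field_simps power2_eq_square)
qed

lemma L_mu_root_le_large_c:
  assumes "0 < d" "L_mu M d = c" "0 < c" "c < 1" "mu_mom M 3 < \<infinity>" "mu_mom M 1 < \<infinity>"
  shows "d \<le> (enn2real (mu_mom M 3) - (2*c - 1)^2 / enn2real (mu_mom M 1)) / (4*(1 - c))"
proof (rule le_of_quadratic_family_bound)
  note B = integrable_mu_mom_1[OF assms(6)]
  have "c \<le> (\<integral>x. d * (1/x * indicator {0<..} x) \<partial>M)"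
    unfolding L_mu_def assms(2)[symmetric]
    by (rule integral_mono[OF integrable_min_one_div integrable_mult_right[OF B(1)]])
       (use assms(1) in \<open>auto simp: indicator_def\<close>)
  also have "\<dots> = d * enn2real (mu_mom M 1)"
    unfolding B(2) by (rule integral_mult_right_zero)
  finally have "0 < d * enn2real (mu_mom M 1)"
    using assms(3) by linarith
  then show "0 < enn2real (mu_mom M 1)"
    using assms(1) zero_less_mult_pos by blast
  show "2*(1 + t) - enn2real (mu_mom M 3) / d - (1 - t)^2 * d * enn2real (mu_mom M 1)
      \<le> 4*t*c" for t
  proof -
    note I = integral_affine_inverse_mu_mom[OF assms(5,6), of "2*(1 + t)" "1/d" "(1 - t)^2 * d"]
    have "(\<integral>x. (2*(1 + t) - 1/d * x - (1 - t)^2 * d / x) * indicator {0<..} x \<partial>M)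
        \<le> 4*t * L_mu M d"
      using assms(1) by (intro integral_le_L_mu[OF _ I(1) min_one_div_ge_quadratic]) simp_all
    then show ?thesis
      unfolding I(2) assms(2) by simp
  qed
qed (use assms(1,4) in simp_all)

lemma L_mu_root_le_delta_star:
  assumes "0 < d" "L_mu M d = c" "0 < c" "c < 1" "mu_mom M 3 < \<infinity>"
  shows "d \<le> delta_star M c"
proof (cases "c \<le> 1/2")
  case True
  then show ?thesis
    using L_mu_root_le_small_c[OF assms(1-3) True assms(5)] by (simp add: delta_star_def)
next
  case False
  then show ?thesis
  proof (cases "mu_mom M 1 = \<infinity>")
    case True
    then show ?thesis
      using False L_mu_root_le_mu_mom_3[OF assms(1,2,4,5)] by (simp add: delta_star_def)
  next
    case False
    then have "mu_mom M 1 < \<infinity>"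
      by (simp add: less_top)
    then show ?thesis
      using \<open>\<not> c \<le> 1/2\<close> False L_mu_root_le_large_c[OF assms] by (simp add: delta_star_def)
  qed
qed

end

theorem theorem1:
  fixes M :: "real measure" and c :: real
  assumes "prob_space M"
    and "sets M = sets borel"
    and "emeasure M {0<..} = 1"
    and "0 < c" and "c < 1"
  shows "(\<exists>!d. 0 < d \<and> L_mu M d = c)
       \<and> (mu_mom M 3 < \<infinity> \<longrightarrow>
            (THE d. 0 < d \<and> L_mu M d = c) \<le> delta_star M c)"
proof -
  interpret positive_prob_space M
    using assms(1-3) by (simp add: positive_prob_space_def positive_prob_space_axioms_def)
  have root: "\<exists>!d. 0 < d \<and> L_mu M d = c"
    using ex1_L_mu_eq assms(4,5) .
  then have "0 < (THE d. 0 < d \<and> L_mu M d = c)" "L_mu M (THE d. 0 < d \<and> L_mu M d = c) = c"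
    using theI'[OF root] by auto
  then show ?thesis
    using root L_mu_root_le_delta_star assms(4,5) by blast
qed

end
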